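(* Let $\ell$ be a $c$-approximate pseudo-metric ($c\ge1$), $\mathcal{H}\subseteq\mathcal{Y}^{\mathcal{X}}$ with $\operatorname{diam}(\mathcal{H})<\infty$, $U\subseteq\mathcal{H}$, $x\in\mathcal{X}$, $s_0,s_1\in\mathcal{Y}$, $\gamma=\ell(s_0,s_1)$, and $U_b=\{h\in U:h(x)=s_b\}$ for $b\in\{0,1\}$, with $U_0,U_1$ both nonempty. Then there exists $b\in\{0,1\}$ with $\Phi(U_b)\le\Phi(U)-\gamma/(4c)$.
   Context: $c$-approximate pseudo-metric: $\ell(y,y)=0$, symmetry, and $\ell(y_1,y_2)\le c(\ell(y_1,y_3)+\ell(y_2,y_3))$. $d_\ell(f,g)=\sup_{x}\ell(f(x),g(x))$, $\operatorname{diam}(\mathcal{H})=\sup_{f,g\in\mathcal{H}}d_\ell(f,g)$. $N(U,\varepsilon)$ is the minimal cardinality of $S\subseteq\mathcal{H}$ such that each $u\in U$ is within $d_\ell$-distance $\le\varepsilon$ of some element of $S$. $\Phi(U)=\int_0^{\operatorname{diam}(\mathcal{H})}\log_2N(U,\varepsilon)\,d\varepsilon\in[0,\infty]$. *)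

theory Defs
  imports "HOL-Analysis.Analysis" "HOL-Library.Extended_Nat"
begin

definition approx_pseudo_metric :: "real \<Rightarrow> ('y \<Rightarrow> 'y \<Rightarrow> real) \<Rightarrow> bool" where
  "approx_pseudo_metric c l \<longleftrightarrow>
     (\<forall>y. l y y = 0) \<and> (\<forall>y1 y2. l y1 y2 = l y2 y1) \<and>
     (\<forall>y1 y2 y3. l y1 y2 \<le> c * (l y1 y3 + l y2 y3))"

definition dist_l :: "('y \<Rightarrow> 'y \<Rightarrow> real) \<Rightarrow> ('x \<Rightarrow> 'y) \<Rightarrow> ('x \<Rightarrow> 'y) \<Rightarrow> ereal" where
  "dist_l l f g = (SUP x. ereal (l (f x) (g x)))"

definition diam_l :: "('y \<Rightarrow> 'y \<Rightarrow> real) \<Rightarrow> ('x \<Rightarrow> 'y) set \<Rightarrow> ereal" where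
  "diam_l l H = (SUP p \<in> H \<times> H. dist_l l (fst p) (snd p))"

text \<open>covering number N(U,eps) with centres in H; infinity if no finite cover exists\<close>
definition cover_num ::
  "('y \<Rightarrow> 'y \<Rightarrow> real) \<Rightarrow> ('x \<Rightarrow> 'y) set \<Rightarrow> ('x \<Rightarrow> 'y) set \<Rightarrow> real \<Rightarrow> enat" where
  "cover_num l H U eps = Inf {enat (card S) | S. finite S \<and> S \<subseteq> H \<and>
       (\<forall>u\<in>U. \<exists>s\<in>S. dist_l l u s \<le> ereal eps)}"

definition log_cover :: "('y \<Rightarrow> 'y \<Rightarrow> real) \<Rightarrow> ('x \<Rightarrow> 'y) set \<Rightarrow> ('x \<Rightarrow> 'y) set \<Rightarrow> real \<Rightarrow> ennreal" where
  "log_cover l H U eps =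
     (case cover_num l H U eps of enat n \<Rightarrow> ennreal (log 2 (real n)) | \<infinity> \<Rightarrow> \<infinity>)"

definition Phi :: "('y \<Rightarrow> 'y \<Rightarrow> real) \<Rightarrow> ('x \<Rightarrow> 'y) set \<Rightarrow> ('x \<Rightarrow> 'y) set \<Rightarrow> ennreal" where
  "Phi l H U = (\<integral>\<^sup>+ eps \<in> {0..real_of_ereal (diam_l l H)}. log_cover l H U eps \<partial>lborel)"

end

theory Submission
  imports Defs
begin

text \<open>
  Below the separation scale \<open>\<epsilon> < \<gamma> / (2 c)\<close> no centre can be \<open>\<epsilon>\<close>-close to an element
  of \<open>U\<^sub>0\<close> and to an element of \<open>U\<^sub>1\<close>, since the approximate triangle inequality would give
  \<open>\<gamma> \<le> 2 c \<epsilon>\<close>. So every cover of \<open>U\<close> splits into disjoint covers of \<open>U\<^sub>0\<close> and \<open>U\<^sub>1\<close>, and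
  \<open>N\<^sub>0 + N\<^sub>1 \<le> N\<close>. Since \<open>4 N\<^sub>0 N\<^sub>1 \<le> (N\<^sub>0 + N\<^sub>1)\<^sup>2\<close>, this yields
  \<open>log N\<^sub>0 + log N\<^sub>1 + 2 \<le> 2 log N\<close>. Integrating over \<open>[0, \<gamma> / (2 c))\<close>, which lies inside
  \<open>[0, diam H]\<close>, and using monotonicity of \<open>N\<close> in the set elsewhere, gives
  \<open>\<Phi>(U\<^sub>0) + \<Phi>(U\<^sub>1) + \<gamma> / c \<le> 2 \<Phi>(U)\<close>; the smaller of the two terms therefore
  satisfies even \<open>\<Phi>(U\<^sub>b) + \<gamma> / (2 c) \<le> \<Phi>(U)\<close>.
\<close>

lemma approx_pseudo_metric_nonneg:
  assumes "approx_pseudo_metric c l" "c > 0"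
  shows "l a b \<ge> 0"
proof -
  have "l a a = 0" "l a a \<le> c * (l a b + l a b)"
    using assms(1) unfolding approx_pseudo_metric_def by blast+
  then show ?thesis using assms(2) by (simp add: zero_le_mult_iff)
qed

lemma ereal_le_dist_l: "ereal (l (f x) (g x)) \<le> dist_l l f g"
  unfolding dist_l_def by (rule SUP_upper) simp

lemma dist_l_le_diam_l: "f \<in> H \<Longrightarrow> g \<in> H \<Longrightarrow> dist_l l f g \<le> diam_l l H"
  unfolding diam_l_def by (rule SUP_upper2[of "(f, g)"]) auto

lemma cover_num_le_card:
  assumes "finite S" "S \<subseteq> H" "\<forall>u\<in>U. \<exists>s\<in>S. dist_l l u s \<le> ereal e"
  shows "cover_num l H U e \<le> enat (card S)"
  unfolding cover_num_def using assms by (intro Inf_lower) blast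

lemma cover_num_greatest:
  assumes "\<And>S. finite S \<Longrightarrow> S \<subseteq> H \<Longrightarrow> \<forall>u\<in>U. \<exists>s\<in>S. dist_l l u s \<le> ereal e \<Longrightarrow> m \<le> enat (card S)"
  shows "m \<le> cover_num l H U e"
  unfolding cover_num_def using assms by (intro Inf_greatest) blast

lemma cover_num_mono: "V \<subseteq> U \<Longrightarrow> cover_num l H V e \<le> cover_num l H U e"
  by (intro cover_num_greatest cover_num_le_card) blast+

lemma cover_num_antimono:
  assumes "e \<le> e'"
  shows "cover_num l H U e' \<le> cover_num l H U e"
proof -
  have "ereal e \<le> ereal e'" using assms by simp
  then show ?thesis by (intro cover_num_greatest cover_num_le_card) (blast intro: order_trans)+
qed

lemma one_le_cover_num: "V \<noteq> {} \<Longrightarrow> 1 \<le> cover_num l H V e"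
  by (rule cover_num_greatest) (auto simp: one_enat_def Suc_le_eq card_gt_0_iff)

lemma cover_num_add_le_if_separated:
  assumes "V\<^sub>0 \<union> V\<^sub>1 \<subseteq> U"
    and separated: "\<And>u\<^sub>0 u\<^sub>1 s. u\<^sub>0 \<in> V\<^sub>0 \<Longrightarrow> u\<^sub>1 \<in> V\<^sub>1 \<Longrightarrow>
        dist_l l u\<^sub>0 s \<le> ereal e \<Longrightarrow> dist_l l u\<^sub>1 s \<le> ereal e \<Longrightarrow> False"
  shows "cover_num l H V\<^sub>0 e + cover_num l H V\<^sub>1 e \<le> cover_num l H U e"
proof (rule cover_num_greatest)
  fix S assume S: "finite S" "S \<subseteq> H" "\<forall>u\<in>U. \<exists>s\<in>S. dist_l l u s \<le> ereal e"
  define S\<^sub>0 where "S\<^sub>0 = {s \<in> S. \<exists>u\<in>V\<^sub>0. dist_l l u s \<le> ereal e}"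
  define S\<^sub>1 where "S\<^sub>1 = {s \<in> S. \<exists>u\<in>V\<^sub>1. dist_l l u s \<le> ereal e}"
  have N\<^sub>0: "cover_num l H V\<^sub>0 e \<le> enat (card S\<^sub>0)"
    using S assms(1) by (intro cover_num_le_card) (auto simp: S\<^sub>0_def, blast)
  have N\<^sub>1: "cover_num l H V\<^sub>1 e \<le> enat (card S\<^sub>1)"
    using S assms(1) by (intro cover_num_le_card) (auto simp: S\<^sub>1_def, blast)
  have "card S\<^sub>0 + card S\<^sub>1 \<le> card S"
  proof -
    have "S\<^sub>0 \<inter> S\<^sub>1 = {}" using separated by (auto simp: S\<^sub>0_def S\<^sub>1_def)
    then have "card S\<^sub>0 + card S\<^sub>1 = card (S\<^sub>0 \<union> S\<^sub>1)"
      using S(1) by (simp add: S\<^sub>0_def S\<^sub>1_def card_Un_disjoint)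
    also have "\<dots> \<le> card S" using S(1) by (intro card_mono) (auto simp: S\<^sub>0_def S\<^sub>1_def)
    finally show ?thesis .
  qed
  then show "cover_num l H V\<^sub>0 e + cover_num l H V\<^sub>1 e \<le> enat (card S)"
    using add_mono[OF N\<^sub>0 N\<^sub>1] by (simp add: order_trans)
qed

lemma cover_num_fibres_add_le:
  assumes "approx_pseudo_metric c l" "c \<ge> 0" "2 * c * e < l s\<^sub>0 s\<^sub>1"
  shows "cover_num l H {h \<in> U. h x = s\<^sub>0} e + cover_num l H {h \<in> U. h x = s\<^sub>1} e
           \<le> cover_num l H U e"
proof (rule cover_num_add_le_if_separated)
  fix u\<^sub>0 u\<^sub>1 s
  assume "u\<^sub>0 \<in> {h \<in> U. h x = s\<^sub>0}" "u\<^sub>1 \<in> {h \<in> U. h x = s\<^sub>1}"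
    and "dist_l l u\<^sub>0 s \<le> ereal e" "dist_l l u\<^sub>1 s \<le> ereal e"
  then have close: "l s\<^sub>0 (s x) \<le> e" "l s\<^sub>1 (s x) \<le> e"
    using order_trans[OF ereal_le_dist_l] by fastforce+
  have "l s\<^sub>0 s\<^sub>1 \<le> c * (l s\<^sub>0 (s x) + l s\<^sub>1 (s x))"
    using assms(1) unfolding approx_pseudo_metric_def by blast
  also have "\<dots> \<le> c * (e + e)" using close assms(2) by (intro mult_left_mono) auto
  finally show False using assms(3) by simp
qed auto

definition log2_enat :: "enat \<Rightarrow> ennreal" where
  "log2_enat m = (case m of enat n \<Rightarrow> ennreal (log 2 (real n)) | \<infinity> \<Rightarrow> \<infinity>)"

lemma log_cover_eq_log2_enat: "log_cover l H U e = log2_enat (cover_num l H U e)"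
  unfolding log_cover_def log2_enat_def by simp

lemma ennreal_log_of_nat_mono:
  assumes "1 < b" "m \<le> n"
  shows "ennreal (log b (real m)) \<le> ennreal (log b (real n))"
  using assms by (cases "m = 0") (simp add: log_def, auto intro!: ennreal_leI log_mono)

lemma log2_enat_mono: "m \<le> n \<Longrightarrow> log2_enat m \<le> log2_enat n"
  unfolding log2_enat_def by (cases m; cases n) (auto intro: ennreal_log_of_nat_mono)

lemma log2_add_le:
  fixes a b n :: real
  assumes "a > 0" "b > 0" "a + b \<le> n"
  shows "log 2 a + log 2 b + 2 \<le> 2 * log 2 n"
proof -
  have "log 2 a + log 2 b + 2 = log 2 (4 * a * b)"
    using assms log_pow_cancel[of 2 2] by (simp add: log_mult)
  also have "\<dots> \<le> log 2 ((a + b)\<^sup>2)"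
    using assms sum_squares_ge_zero[of "a - b" 0]
    by (intro log_mono) (auto simp: power2_eq_square algebra_simps)
  also have "\<dots> \<le> log 2 (n\<^sup>2)"
    using assms by (intro log_mono power_mono) auto
  also have "\<dots> = 2 * log 2 n"
    using assms by (simp add: log_nat_power)
  finally show ?thesis .
qed

lemma log2_enat_add_le:
  assumes "1 \<le> m\<^sub>0" "1 \<le> m\<^sub>1" "m\<^sub>0 + m\<^sub>1 \<le> m"
  shows "log2_enat m\<^sub>0 + log2_enat m\<^sub>1 + 2 \<le> 2 * log2_enat m"
proof (cases m)
  case (enat n)
  then obtain n\<^sub>0 n\<^sub>1 where n: "m\<^sub>0 = enat n\<^sub>0" "m\<^sub>1 = enat n\<^sub>1"
    using assms(3) by (cases m\<^sub>0; cases m\<^sub>1) auto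
  with enat assms have pos: "n\<^sub>0 \<ge> 1" "n\<^sub>1 \<ge> 1" "n\<^sub>0 + n\<^sub>1 \<le> n"
    by (auto simp: one_enat_def)
  then have "ennreal (log 2 n\<^sub>0) + ennreal (log 2 n\<^sub>1) + 2 = ennreal (log 2 n\<^sub>0 + log 2 n\<^sub>1 + 2)"
    by (simp add: ennreal_plus)
  also have "\<dots> \<le> ennreal (2 * log 2 n)"
    using pos by (intro ennreal_leI log2_add_le) auto
  also have "\<dots> = 2 * ennreal (log 2 n)"
    by (simp add: ennreal_mult')
  finally show ?thesis using enat n by (simp add: log2_enat_def)
qed (simp add: log2_enat_def)

lemma log_cover_fibres_add_le:
  assumes "approx_pseudo_metric c l" "c \<ge> 0" "2 * c * e < l s\<^sub>0 s\<^sub>1"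
    and "{h \<in> U. h x = s\<^sub>0} \<noteq> {}" "{h \<in> U. h x = s\<^sub>1} \<noteq> {}"
  shows "log_cover l H {h \<in> U. h x = s\<^sub>0} e + log_cover l H {h \<in> U. h x = s\<^sub>1} e + 2
           \<le> 2 * log_cover l H U e"
  unfolding log_cover_eq_log2_enat
  using assms by (intro log2_enat_add_le cover_num_fibres_add_le one_le_cover_num)

lemma log_cover_mono: "V \<subseteq> U \<Longrightarrow> log_cover l H V e \<le> log_cover l H U e"
  unfolding log_cover_eq_log2_enat by (intro log2_enat_mono cover_num_mono)

lemma log_cover_antimono: "antimono (log_cover l H U)"
  unfolding antimono_def log_cover_eq_log2_enat by (blast intro: log2_enat_mono cover_num_antimono)

lemma borel_measurable_antimono_ennreal:
  fixes f :: "real \<Rightarrow> ennreal"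
  assumes "antimono f"
  shows "f \<in> borel_measurable borel"
proof (rule borel_measurableI_greater)
  fix y
  have "is_interval {x. y < f x}"
    using assms unfolding is_interval_1 antimono_def by (auto intro: less_le_trans)
  then show "{x \<in> space borel. y < f x} \<in> sets borel"
    by (simp add: real_interval_borel_measurable)
qed

lemma nn_integral_Icc_add_le:
  fixes f g\<^sub>0 g\<^sub>1 :: "real \<Rightarrow> ennreal"
  assumes [measurable]: "f \<in> borel_measurable borel" "g\<^sub>0 \<in> borel_measurable borel"
      "g\<^sub>1 \<in> borel_measurable borel"
    and "\<And>e. g\<^sub>0 e \<le> f e" "\<And>e. g\<^sub>1 e \<le> f e"
    and gain: "\<And>e. 0 \<le> e \<Longrightarrow> e < \<delta> \<Longrightarrow> g\<^sub>0 e + g\<^sub>1 e + 2 \<le> 2 * f e"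
    and "0 \<le> \<delta>" "\<delta> \<le> D"
  shows "(\<integral>\<^sup>+ e \<in> {0..D}. g\<^sub>0 e \<partial>lborel) + (\<integral>\<^sup>+ e \<in> {0..D}. g\<^sub>1 e \<partial>lborel) + 2 * ennreal \<delta>
           \<le> 2 * (\<integral>\<^sup>+ e \<in> {0..D}. f e \<partial>lborel)"
proof -
  let ?I = "indicator {0..D} :: real \<Rightarrow> ennreal" and ?J = "indicator {0..<\<delta>} :: real \<Rightarrow> ennreal"
  have pointwise: "g\<^sub>0 e * ?I e + g\<^sub>1 e * ?I e + 2 * ?J e \<le> 2 * (f e * ?I e)" for e
  proof (cases "0 \<le> e \<and> e < \<delta>")
    case True
    then show ?thesis using gain[of e] \<open>\<delta> \<le> D\<close> by (simp add: indicator_def)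
  next
    case False
    have "g\<^sub>0 e * ?I e + g\<^sub>1 e * ?I e \<le> f e * ?I e + f e * ?I e"
      using assms(4,5) by (intro add_mono mult_right_mono) auto
    moreover have "?J e = 0" using False by simp
    ultimately show ?thesis by (simp only: mult_2 mult_zero_right add_0_right)
  qed
  have "(\<integral>\<^sup>+ e. g\<^sub>0 e * ?I e \<partial>lborel) + (\<integral>\<^sup>+ e. g\<^sub>1 e * ?I e \<partial>lborel) + 2 * ennreal \<delta>
      = (\<integral>\<^sup>+ e. g\<^sub>0 e * ?I e + g\<^sub>1 e * ?I e + 2 * ?J e \<partial>lborel)"
    using \<open>0 \<le> \<delta>\<close> by (simp add: nn_integral_add nn_integral_cmult_indicator)
  also have "\<dots> \<le> (\<integral>\<^sup>+ e. 2 * (f e * ?I e) \<partial>lborel)"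
    by (intro nn_integral_mono pointwise)
  also have "\<dots> = 2 * (\<integral>\<^sup>+ e. f e * ?I e \<partial>lborel)"
    by (simp add: nn_integral_cmult)
  finally show ?thesis .
qed

lemma Phi_fibres_add_le:
  assumes "approx_pseudo_metric c l" "c \<ge> 1" "diam_l l H < \<infinity>" "U \<subseteq> H"
    and nonempty: "{h \<in> U. h x = s\<^sub>0} \<noteq> {}" "{h \<in> U. h x = s\<^sub>1} \<noteq> {}"
  shows "Phi l H {h \<in> U. h x = s\<^sub>0} + Phi l H {h \<in> U. h x = s\<^sub>1} + 2 * ennreal (l s\<^sub>0 s\<^sub>1 / (2 * c))
           \<le> 2 * Phi l H U"
proof -
  have measurable: "log_cover l H V \<in> borel_measurable borel" for V
    by (intro borel_measurable_antimono_ennreal log_cover_antimono)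
  have mono: "log_cover l H {h \<in> U. h x = s} e \<le> log_cover l H U e" for s e
    by (intro log_cover_mono) blast
  have gain: "log_cover l H {h \<in> U. h x = s\<^sub>0} e + log_cover l H {h \<in> U. h x = s\<^sub>1} e + 2
      \<le> 2 * log_cover l H U e" if "e < l s\<^sub>0 s\<^sub>1 / (2 * c)" for e
    using that assms(1,2) nonempty by (intro log_cover_fibres_add_le) (auto simp: field_simps)
  have "0 \<le> l s\<^sub>0 s\<^sub>1" using assms(1,2) by (intro approx_pseudo_metric_nonneg) auto
  then have "0 \<le> l s\<^sub>0 s\<^sub>1 / (2 * c)" using \<open>c \<ge> 1\<close> by simp
  obtain u\<^sub>0 u\<^sub>1 where "u\<^sub>0 \<in> U" "u\<^sub>0 x = s\<^sub>0" "u\<^sub>1 \<in> U" "u\<^sub>1 x = s\<^sub>1"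
    using nonempty by blast
  then have "ereal (l s\<^sub>0 s\<^sub>1) \<le> diam_l l H"
    using ereal_le_dist_l[of l u\<^sub>0 x u\<^sub>1] dist_l_le_diam_l[of u\<^sub>0 H u\<^sub>1 l] \<open>U \<subseteq> H\<close>
    by (meson order_trans subsetD)
  with \<open>diam_l l H < \<infinity>\<close> obtain D where D: "diam_l l H = ereal D" "l s\<^sub>0 s\<^sub>1 \<le> D"
    by (cases "diam_l l H") auto
  have "l s\<^sub>0 s\<^sub>1 / (2 * c) \<le> l s\<^sub>0 s\<^sub>1"
    using \<open>c \<ge> 1\<close> mult_right_mono[of 1 "2 * c" "l s\<^sub>0 s\<^sub>1"] \<open>0 \<le> l s\<^sub>0 s\<^sub>1\<close>
    by (simp add: field_simps)
  with D(2) have "l s\<^sub>0 s\<^sub>1 / (2 * c) \<le> D" by linarith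
  then show ?thesis
    unfolding Phi_def D(1) real_of_ereal.simps
    using \<open>0 \<le> l s\<^sub>0 s\<^sub>1 / (2 * c)\<close>
    by (intro nn_integral_Icc_add_le measurable mono gain)
qed

lemma ennreal_min_add_le_of_add_le_double:
  fixes a\<^sub>0 a\<^sub>1 d p :: ennreal
  assumes "a\<^sub>0 + a\<^sub>1 + 2 * d \<le> 2 * p"
  shows "min a\<^sub>0 a\<^sub>1 + d \<le> p"
proof -
  have "2 * (min a\<^sub>0 a\<^sub>1 + d) \<le> a\<^sub>0 + a\<^sub>1 + 2 * d"
    by (simp add: distrib_left mult_2 add_mono)
  also note assms
  finally show ?thesis by (subst (asm) ennreal_mult_le_mult_iff) auto
qed

theorem lemma3p3:
  fixes l :: "'y \<Rightarrow> 'y \<Rightarrow> real" and c :: real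
    and H U :: "('x \<Rightarrow> 'y) set" and x :: 'x and s0 s1 :: 'y
  assumes "c \<ge> 1" and "approx_pseudo_metric c l"
    and "diam_l l H < \<infinity>"
    and "U \<subseteq> H"
    and "{h \<in> U. h x = s0} \<noteq> {}" and "{h \<in> U. h x = s1} \<noteq> {}"
  shows "\<exists>b \<in> {s0, s1}.
           Phi l H {h \<in> U. h x = b} + ennreal (l s0 s1 / (4 * c)) \<le> Phi l H U"
proof -
  let ?\<gamma> = "l s0 s1" and ?\<Phi>\<^sub>0 = "Phi l H {h \<in> U. h x = s0}" and ?\<Phi>\<^sub>1 = "Phi l H {h \<in> U. h x = s1}"
  have "?\<Phi>\<^sub>0 + ?\<Phi>\<^sub>1 + 2 * ennreal (?\<gamma> / (2 * c)) \<le> 2 * Phi l H U"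
    using assms by (intro Phi_fibres_add_le)
  then have "min ?\<Phi>\<^sub>0 ?\<Phi>\<^sub>1 + ennreal (?\<gamma> / (2 * c)) \<le> Phi l H U"
    by (rule ennreal_min_add_le_of_add_le_double)
  moreover have "?\<gamma> / (4 * c) \<le> ?\<gamma> / (2 * c)"
    using assms(1) approx_pseudo_metric_nonneg[OF assms(2), of s0 s1]
    by (intro divide_left_mono) auto
  ultimately have "min ?\<Phi>\<^sub>0 ?\<Phi>\<^sub>1 + ennreal (?\<gamma> / (4 * c)) \<le> Phi l H U"
    by (meson add_left_mono ennreal_leI order_trans)
  then show ?thesis by (cases "?\<Phi>\<^sub>0 \<le> ?\<Phi>\<^sub>1") (auto simp: min_def)
qed

end
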